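(* Let $A\in\mathbb{R}^{n\times n}$ be monotone and let $A=P_1-R_1+S_1=P_2-R_2+S_2=P_3-R_3+S_3=P_4-R_4+S_4$ be four double weak regular splittings of $A$. Suppose $1\notin\sigma(S_2P_1^{-1})$ and $1\notin\sigma(S_4P_3^{-1})$. Define $\widehat{A}_1=(I-S_2P_1^{-1})A$, $\widehat{P}_1=P_2$, $\widehat{R}_1=R_2-S_2P_1^{-1}R_1$, and $\widehat{A}_2=(I-S_4P_3^{-1})A$, $\widehat{P}_2=P_4$, $\widehat{R}_2=R_4-S_4P_3^{-1}R_3$, and suppose $\widehat{A}_i^{-1}\geq 0$ for $i=1,2$. If $\widehat{P}_1^{-1}\widehat{A}_1\geq\widehat{P}_2^{-1}\widehat{A}_2$ and $\widehat{P}_1^{-1}\widehat{R}_1\geq\widehat{P}_2^{-1}\widehat{R}_2$, then $\rho(W_{12})\leq\rho(W_{34})<1$, where $$W_{12}=\begin{pmatrix} P_2^{-1}R_2-P_2^{-1}S_2P_1^{-1}R_1 & P_2^{-1}S_2P_1^{-1}S_1\\ I & 0\end{pmatrix},\qquad W_{34}=\begin{pmatrix} P_4^{-1}R_4-P_4^{-1}S_4P_3^{-1}R_3 & P_4^{-1}S_4P_3^{-1}S_3\\ I & 0\end{pmatrix}.$$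
   Context: Inequalities are entrywise; $\rho$ is the spectral radius, $\sigma$ the spectrum. $A$ is monotone if $A$ is nonsingular and $A^{-1}\geq 0$. A double splitting $A=P-R+S$ with $P$ nonsingular is a double weak regular splitting if $P^{-1}\geq 0$, $P^{-1}R\geq0$, $P^{-1}S\leq0$. *)

theory Defs
  imports "Jordan_Normal_Form.Spectral_Radius"
begin

definition minv :: "real mat \<Rightarrow> real mat" where
  "minv A = (SOME B. inverts_mat A B \<and> inverts_mat B A)"

definition monotone_mat :: "real mat \<Rightarrow> bool" where
  "monotone_mat A \<longleftrightarrow> invertible_mat A \<and> minv A \<ge> 0\<^sub>m (dim_row A) (dim_col A)"

definition double_weak_regular_splitting ::
  "real mat \<Rightarrow> real mat \<Rightarrow> real mat \<Rightarrow> real mat \<Rightarrow> bool" where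
  "double_weak_regular_splitting A P R S \<longleftrightarrow>
     A = P - R + S \<and> invertible_mat P \<and>
     minv P \<ge> 0\<^sub>m (dim_row P) (dim_col P) \<and>
     minv P * R \<ge> 0\<^sub>m (dim_row P) (dim_col R) \<and>
     minv P * S \<le> 0\<^sub>m (dim_row P) (dim_col S)"

definition rho :: "real mat \<Rightarrow> real" where
  "rho A = spectral_radius (map_mat complex_of_real A)"

end

theory Submission
  imports Defs
begin

text \<open>
Both iteration matrices are block companion matrices W = [[B, C], [I, 0]] with B, C \<ge> 0,
and everything rests on the Collatz-Wielandt bounds for a nonnegative matrix W: a positive
vector z with W z \<le> \<beta> z certifies \<rho>(W) \<le> \<beta>, and such a z exists for every \<beta> > \<rho>(W),
namely a long enough partial sum of the Neumann series of W/\<beta> applied to e = (1, ..., 1),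
because the powers of W/\<beta> tend to 0.

Composing the splittings gives I - B - C = inv(P) * Ahat. Since Ahat is monotone,
y = inv(Ahat) e is positive and (I - B - C) y = inv(P) e is positive, i.e. (B + C) y < y;
then (\<beta> y, y) certifies \<rho>(W34) \<le> \<beta> < 1 for a suitable \<beta>. For the comparison, a positive z
with W34 z \<le> \<beta> z and \<beta> \<le> 1 has its upper half below its lower half; together with
B12 \<ge> B34 and B12 + C12 \<le> B34 + C34 this gives W12 z \<le> W34 z \<le> \<beta> z, so
\<rho>(W12) \<le> \<beta> for every \<beta> between \<rho>(W34) and 1.
\<close>

section \<open>Inverses and the entrywise order\<close>

lemma minv_inverts:
  assumes "invertible_mat A"
  shows "inverts_mat A (minv A) \<and> inverts_mat (minv A) A"
  using assms unfolding minv_def invertible_mat_def by (metis (mono_tags, lifting) someI_ex)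

lemma
  fixes A :: "real mat"
  assumes A: "A \<in> carrier_mat n n" and inv: "invertible_mat A"
  shows minv_carrier_mat: "minv A \<in> carrier_mat n n"
    and mult_minv_mat: "A * minv A = 1\<^sub>m n"
    and minv_mult_mat: "minv A * A = 1\<^sub>m n"
proof -
  have right: "inverts_mat A (minv A)" and left: "inverts_mat (minv A) A"
    using minv_inverts[OF inv] by auto
  show AB: "A * minv A = 1\<^sub>m n"
    using right A unfolding inverts_mat_def by simp
  have "dim_row (minv A) = dim_col (minv A * A)"
    using left unfolding inverts_mat_def by (metis index_one_mat(3))
  moreover have "dim_col (minv A) = n"
    using AB by (metis index_mult_mat(3) index_one_mat(3))
  ultimately show C: "minv A \<in> carrier_mat n n"
    using A by auto
  show "minv A * A = 1\<^sub>m n"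
    using left C unfolding inverts_mat_def by simp
qed

lemma invertible_minv:
  fixes A :: "real mat"
  assumes "A \<in> carrier_mat n n" "invertible_mat A"
  shows "invertible_mat (minv A)"
  using minv_inverts[OF assms(2)] minv_carrier_mat[OF assms] unfolding invertible_mat_def by auto

lemma mult_mat_index_sum:
  fixes A B :: "'a :: semiring_0 mat"
  assumes "A \<in> carrier_mat n k" "B \<in> carrier_mat k m" "i < n" "j < m"
  shows "(A * B) $$ (i, j) = (\<Sum>l<k. A $$ (i, l) * B $$ (l, j))"
  using assms by (auto simp: scalar_prod_def lessThan_atLeast0 intro!: sum.cong)

lemma nonneg_mat_index:
  fixes A :: "'a :: {zero, order} mat"
  assumes "0\<^sub>m n m \<le> A" "i < n" "j < m"
  shows "0 \<le> A $$ (i, j)"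
  using assms by (auto simp: less_eq_mat_def)

lemma mult_mat_nonneg:
  fixes X Y :: "'a :: linordered_ring mat"
  assumes XY: "X \<in> carrier_mat n k" "Y \<in> carrier_mat k m"
    and "0\<^sub>m n k \<le> X" "0\<^sub>m k m \<le> Y"
  shows "0\<^sub>m n m \<le> X * Y"
proof -
  have "0 \<le> (X * Y) $$ (i, j)" if "i < n" "j < m" for i j
    unfolding mult_mat_index_sum[OF XY that]
    using assms that by (auto simp: less_eq_mat_def intro!: sum_nonneg)
  then show ?thesis
    using XY by (auto simp: less_eq_mat_def)
qed

lemma mult_mat_nonpos_nonneg:
  fixes X Y :: "'a :: linordered_ring mat"
  assumes XY: "X \<in> carrier_mat n k" "Y \<in> carrier_mat k m"
    and "X \<le> 0\<^sub>m n k" "0\<^sub>m k m \<le> Y"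
  shows "X * Y \<le> 0\<^sub>m n m"
proof -
  have "(X * Y) $$ (i, j) \<le> 0" if "i < n" "j < m" for i j
    unfolding mult_mat_index_sum[OF XY that]
    using assms that by (auto simp: less_eq_mat_def mult_nonpos_nonneg intro!: sum_nonpos)
  then show ?thesis
    using XY by (auto simp: less_eq_mat_def)
qed

lemma mult_mat_nonpos_nonpos:
  fixes X Y :: "'a :: linordered_ring mat"
  assumes XY: "X \<in> carrier_mat n k" "Y \<in> carrier_mat k m"
    and "X \<le> 0\<^sub>m n k" "Y \<le> 0\<^sub>m k m"
  shows "0\<^sub>m n m \<le> X * Y"
proof -
  have "0 \<le> (X * Y) $$ (i, j)" if "i < n" "j < m" for i j
    unfolding mult_mat_index_sum[OF XY that]
    using assms that by (auto simp: less_eq_mat_def mult_nonpos_nonpos intro!: sum_nonneg)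
  then show ?thesis
    using XY by (auto simp: less_eq_mat_def)
qed

lemma nonneg_minus_nonpos_mat:
  fixes U W :: "'a :: ordered_ab_group_add mat"
  assumes "0\<^sub>m n m \<le> U" "W \<le> 0\<^sub>m n m"
  shows "0\<^sub>m n m \<le> U - W"
  using assms by (fastforce simp: less_eq_mat_def intro: order.trans)

lemma one_minus_minus_le_mat_iff:
  fixes B C B' C' :: "'a :: linordered_idom mat"
  assumes "B \<in> carrier_mat n n" "C \<in> carrier_mat n n" "B' \<in> carrier_mat n n" "C' \<in> carrier_mat n n"
  shows "1\<^sub>m n - B - C \<le> 1\<^sub>m n - B' - C' \<longleftrightarrow> B' + C' \<le> B + C"
  using assms by (auto simp: less_eq_mat_def algebra_simps)

lemma mult_mat_assoc_middle:
  fixes A B C D :: "'a :: semiring_1 mat"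
  assumes "A \<in> carrier_mat n n" "B \<in> carrier_mat n n" "C \<in> carrier_mat n n" "D \<in> carrier_mat n n"
  shows "A * B * C * D = (A * B) * (C * D)"
  by (rule assoc_mult_mat[of "A * B" n n C n D n]) (use assms in auto)

lemma mult_minus_mult_assoc_mat:
  fixes X R' S' Y R :: "real mat"
  assumes "X \<in> carrier_mat n n" "R' \<in> carrier_mat n n" "S' \<in> carrier_mat n n"
    "Y \<in> carrier_mat n n" "R \<in> carrier_mat n n"
  shows "X * (R' - S' * Y * R) = X * R' - X * S' * Y * R"
  using assms by (simp add: mult_minus_distrib_mat[of _ n n _ n] assoc_mult_mat[of _ n n _ n _ n])

lemma pow_mat_Suc_left:
  fixes A :: "'a :: semiring_1 mat"
  assumes A: "A \<in> carrier_mat n n"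
  shows "A ^\<^sub>m Suc k = A * A ^\<^sub>m k"
proof (induction k)
  case 0
  show ?case using A by simp
next
  case (Suc k)
  have "A ^\<^sub>m Suc (Suc k) = (A * A ^\<^sub>m k) * A"
    using Suc by simp
  also have "\<dots> = A * A ^\<^sub>m Suc k"
    using A by (simp add: assoc_mult_mat[of A n n _ n A n])
  finally show ?case .
qed

lemma pow_mat_nonneg:
  fixes T :: "'a :: linordered_idom mat"
  assumes T: "T \<in> carrier_mat n n" and nonneg: "0\<^sub>m n n \<le> T"
  shows "0\<^sub>m n n \<le> T ^\<^sub>m k"
proof (induction k)
  case 0
  show ?case using T by (auto simp: less_eq_mat_def)
next
  case (Suc k)
  then show ?case using mult_mat_nonneg[OF pow_carrier_mat[OF T] T _ nonneg] by simp
qed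

lemma smult_pow_mat:
  fixes A :: "'a :: comm_ring_1 mat"
  assumes A: "A \<in> carrier_mat n n"
  shows "(a \<cdot>\<^sub>m A) ^\<^sub>m k = a ^ k \<cdot>\<^sub>m A ^\<^sub>m k"
proof (induction k)
  case 0
  show ?case using A by (intro eq_matI) auto
next
  case (Suc k)
  then show ?case
    using A by (intro eq_matI) (auto simp: scalar_prod_def sum_distrib_left algebra_simps)
qed

lemma sum_mult_row_sums:
  fixes X Y :: "'a :: comm_semiring_0 mat"
  assumes "X \<in> carrier_mat n k" "Y \<in> carrier_mat k m" "i < n"
  shows "(\<Sum>j<k. X $$ (i, j) * (\<Sum>l<m. Y $$ (j, l))) = (\<Sum>l<m. (X * Y) $$ (i, l))"
proof -
  have "(\<Sum>j<k. X $$ (i, j) * (\<Sum>l<m. Y $$ (j, l))) = (\<Sum>l<m. \<Sum>j<k. X $$ (i, j) * Y $$ (j, l))"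
    by (simp add: sum_distrib_left sum.swap[of _ "{..<k}"])
  also have "\<dots> = (\<Sum>l<m. (X * Y) $$ (i, l))"
    using assms by (intro sum.cong) (simp_all add: mult_mat_index_sum[symmetric])
  finally show ?thesis .
qed

lemma nonneg_invertible_row_sum_pos:
  fixes X :: "real mat"
  assumes X: "X \<in> carrier_mat n n" and nonneg: "0\<^sub>m n n \<le> X"
    and inv: "invertible_mat X" and i: "i < n"
  shows "0 < (\<Sum>j<n. X $$ (i, j))"
proof (rule ccontr)
  assume "\<not> ?thesis"
  then have "X $$ (i, j) = 0" if "j < n" for j
    using sum_nonneg_eq_0_iff[of "{..<n}" "\<lambda>j. X $$ (i, j)"] nonneg_mat_index[OF nonneg i] that
    by (metis finite_lessThan lessThan_iff linorder_not_less order_antisym sum_nonneg)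
  obtain Y where Y: "X * Y = 1\<^sub>m n" and YX: "Y * X = 1\<^sub>m (dim_row Y)"
    using inv X unfolding invertible_mat_def inverts_mat_def by auto
  have Y_carrier: "Y \<in> carrier_mat n n"
    using X Y YX by (metis carrier_matD carrier_matI index_mult_mat(3) index_one_mat(3))
  from \<open>\<And>j. j < n \<Longrightarrow> X $$ (i, j) = 0\<close> have "(X * Y) $$ (i, i) = 0"
    unfolding mult_mat_index_sum[OF X Y_carrier i i] by simp
  then show False
    using Y i by simp
qed

section \<open>Collatz-Wielandt bounds for the spectral radius\<close>

definition positive_subinvariant :: "real mat \<Rightarrow> real \<Rightarrow> (nat \<Rightarrow> real) \<Rightarrow> bool" where
  "positive_subinvariant W \<beta> z \<longleftrightarrow>
     (\<forall>i < dim_row W. 0 < z i \<and> (\<Sum>j < dim_col W. W $$ (i, j) * z j) \<le> \<beta> * z i)"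

lemma rho_eigenvector:
  fixes W :: "real mat"
  assumes W: "W \<in> carrier_mat m m" and m: "0 < m"
  obtains \<mu> v where "rho W = cmod \<mu>" "v \<in> carrier_vec m" "v \<noteq> 0\<^sub>v m"
    "map_mat complex_of_real W *\<^sub>v v = \<mu> \<cdot>\<^sub>v v"
proof -
  have "map_mat complex_of_real W \<in> carrier_mat m m"
    using W by simp
  from spectral_radius_mem_max(1)[OF this m] obtain \<mu> where
    "\<mu> \<in> spectrum (map_mat complex_of_real W)" "rho W = cmod \<mu>"
    unfolding rho_def by auto
  then show ?thesis
    using that W unfolding spectrum_def eigenvalue_def eigenvector_def by auto
qed

lemma eigenvalue_norm_le_rho:
  fixes W :: "real mat"
  assumes W: "W \<in> carrier_mat m m" and v: "v \<in> carrier_vec m" "v \<noteq> 0\<^sub>v m"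
    and eigen: "map_mat complex_of_real W *\<^sub>v v = \<mu> \<cdot>\<^sub>v v"
  shows "cmod \<mu> \<le> rho W"
proof -
  have m: "0 < m"
    using v by (metis carrier_vecD eq_vecI gr0I less_zeroE index_zero_vec(2))
  have "\<mu> \<in> spectrum (map_mat complex_of_real W)"
    using W v eigen unfolding spectrum_def eigenvalue_def eigenvector_def by auto
  then show ?thesis
    using spectral_radius_mem_max(2)[of _ m] W m unfolding rho_def by simp
qed

lemma rho_nonneg:
  fixes W :: "real mat"
  assumes "W \<in> carrier_mat m m" "0 < m"
  shows "0 \<le> rho W"
  using rho_eigenvector[OF assms] by (metis norm_ge_zero)

lemma rho_smult_le:
  fixes W :: "real mat"
  assumes W: "W \<in> carrier_mat m m" and m: "0 < m" and a: "0 < a"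
  shows "rho (a \<cdot>\<^sub>m W) \<le> a * rho W"
proof -
  obtain \<mu> v where rho: "rho (a \<cdot>\<^sub>m W) = cmod \<mu>" and v: "v \<in> carrier_vec m" "v \<noteq> 0\<^sub>v m"
    and eigen: "map_mat complex_of_real (a \<cdot>\<^sub>m W) *\<^sub>v v = \<mu> \<cdot>\<^sub>v v"
    using rho_eigenvector[of "a \<cdot>\<^sub>m W" m] W m by auto
  have "map_mat complex_of_real (a \<cdot>\<^sub>m W) *\<^sub>v v
      = complex_of_real a \<cdot>\<^sub>v (map_mat complex_of_real W *\<^sub>v v)"
    using W v by (intro eq_vecI) (auto simp: scalar_prod_def sum_distrib_left algebra_simps)
  with eigen a have "map_mat complex_of_real W *\<^sub>v v = (\<mu> / complex_of_real a) \<cdot>\<^sub>v v"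
    by (metis (no_types, lifting) divide_self_if nonzero_mult_div_cancel_left of_real_eq_0_iff
        less_irrefl smult_smult_assoc one_smult_vec times_divide_eq_left)
  from eigenvalue_norm_le_rho[OF W v this] have "cmod \<mu> / a \<le> rho W"
    using a by (simp add: norm_divide)
  then show ?thesis
    using rho a by (simp add: divide_le_eq mult.commute)
qed

lemma eigenvector_entry_norm_le:
  fixes W :: "real mat"
  assumes W: "W \<in> carrier_mat m m" and nonneg: "0\<^sub>m m m \<le> W" and v: "v \<in> carrier_vec m"
    and eigen: "map_mat complex_of_real W *\<^sub>v v = \<mu> \<cdot>\<^sub>v v" and i: "i < m"
  shows "cmod \<mu> * cmod (v $ i) \<le> (\<Sum>j<m. W $$ (i, j) * cmod (v $ j))"
proof -
  have "cmod \<mu> * cmod (v $ i) = cmod ((map_mat complex_of_real W *\<^sub>v v) $ i)"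
    using eigen i v by (simp add: norm_mult)
  also have "\<dots> = cmod (\<Sum>j<m. complex_of_real (W $$ (i, j)) * v $ j)"
    using i v W by (auto simp: scalar_prod_def lessThan_atLeast0 intro!: arg_cong[of _ _ cmod] sum.cong)
  also have "\<dots> \<le> (\<Sum>j<m. W $$ (i, j) * cmod (v $ j))"
    using nonneg_mat_index[OF nonneg i] by (auto simp: norm_mult intro!: order.trans[OF norm_sum] sum_mono)
  finally show ?thesis .
qed

lemma rho_le_if_positive_subinvariant:
  fixes W :: "real mat"
  assumes W: "W \<in> carrier_mat m m" and m: "0 < m" and nonneg: "0\<^sub>m m m \<le> W"
    and z: "positive_subinvariant W \<beta> z"
  shows "rho W \<le> \<beta>"
proof -
  obtain \<mu> v where rho: "rho W = cmod \<mu>" and v: "v \<in> carrier_vec m" "v \<noteq> 0\<^sub>v m"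
    and eigen: "map_mat complex_of_real W *\<^sub>v v = \<mu> \<cdot>\<^sub>v v"
    using rho_eigenvector[OF W m] by blast
  have z_pos: "0 < z i" and z_sub: "(\<Sum>j<m. W $$ (i, j) * z j) \<le> \<beta> * z i" if "i < m" for i
    using z that W unfolding positive_subinvariant_def by auto
  define ratio where "ratio i = cmod (v $ i) / z i" for i
  obtain i0 where i0: "i0 < m" and max: "\<And>j. j < m \<Longrightarrow> ratio j \<le> ratio i0"
    using Max_in[of "ratio ` {..<m}"] Max_ge[of "ratio ` {..<m}"] m
    by (metis empty_iff finite_imageI finite_lessThan image_iff image_eqI lessThan_iff)
  have v_le: "cmod (v $ j) \<le> ratio i0 * z j" if "j < m" for j
    using max[OF that] z_pos[OF that] unfolding ratio_def by (simp add: divide_le_eq)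
  have "cmod (v $ i0) > 0"
  proof (rule ccontr)
    assume "\<not> ?thesis"
    then have "ratio i0 = 0"
      unfolding ratio_def by simp
    then have "v $ j = 0" if "j < m" for j
      using v_le[OF that] by simp
    then show False
      using v by (metis eq_vecI carrier_vecD index_zero_vec)
  qed
  have "cmod \<mu> * cmod (v $ i0) \<le> (\<Sum>j<m. W $$ (i0, j) * cmod (v $ j))"
    by (rule eigenvector_entry_norm_le[OF W nonneg v(1) eigen i0])
  also have "\<dots> \<le> (\<Sum>j<m. W $$ (i0, j) * (ratio i0 * z j))"
    using nonneg_mat_index[OF nonneg i0] v_le by (intro sum_mono mult_left_mono) auto
  also have "\<dots> = ratio i0 * (\<Sum>j<m. W $$ (i0, j) * z j)"
    by (simp add: sum_distrib_left algebra_simps)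
  also have "\<dots> \<le> ratio i0 * (\<beta> * z i0)"
    using z_sub[OF i0] z_pos[OF i0] by (intro mult_left_mono) (auto simp: ratio_def)
  also have "\<dots> = \<beta> * cmod (v $ i0)"
    using z_pos[OF i0] unfolding ratio_def by simp
  finally show ?thesis
    using rho \<open>cmod (v $ i0) > 0\<close> by simp
qed

(* The library bound on powers needs spectral radius < 1 and only gives boundedness;
   applied to T / b it yields geometric decay of T^k. *)
lemma pow_mat_geometric_bound:
  fixes T :: "real mat"
  assumes T: "T \<in> carrier_mat m m" and m: "0 < m" and rho: "rho T < b"
  obtains c where "\<And>k i j. i < m \<Longrightarrow> j < m \<Longrightarrow> \<bar>(T ^\<^sub>m k) $$ (i, j)\<bar> \<le> c * b ^ k"
proof -
  have b: "0 < b"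
    using rho rho_nonneg[OF T m] by simp
  have "rho ((1 / b) \<cdot>\<^sub>m T) \<le> rho T / b"
    using rho_smult_le[OF T m, of "1 / b"] b by simp
  moreover have "rho T / b < 1"
    using rho b by simp
  ultimately have "rho ((1 / b) \<cdot>\<^sub>m T) < 1"
    by linarith
  then obtain c where c: "\<And>k. norm_bound (map_mat complex_of_real ((1 / b) \<cdot>\<^sub>m T) ^\<^sub>m k) c"
    using spectral_radius_jnf_norm_bound_less_1_upper_triangular[of _ m] T
    unfolding rho_def by fastforce
  have "\<bar>(T ^\<^sub>m k) $$ (i, j)\<bar> \<le> c * b ^ k" if ij: "i < m" "j < m" for k i j
  proof -
    have "map_mat complex_of_real ((1 / b) \<cdot>\<^sub>m T) ^\<^sub>m k
        = map_mat complex_of_real (((1 / b) \<cdot>\<^sub>m T) ^\<^sub>m k)"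
      by (rule of_real_hom.mat_hom_pow[of _ m, symmetric]) (use T in simp)
    also have "\<dots> = map_mat complex_of_real ((1 / b) ^ k \<cdot>\<^sub>m T ^\<^sub>m k)"
      by (simp add: smult_pow_mat[OF T])
    finally have "norm_bound (map_mat complex_of_real ((1 / b) ^ k \<cdot>\<^sub>m T ^\<^sub>m k)) c"
      using c[of k] by simp
    then have "cmod (complex_of_real ((1 / b) ^ k * (T ^\<^sub>m k) $$ (i, j))) \<le> c"
      using T ij unfolding norm_bound_def by auto
    then have "\<bar>(1 / b) ^ k * (T ^\<^sub>m k) $$ (i, j)\<bar> \<le> c"
      by (simp only: norm_of_real)
    then show ?thesis
      using b by (simp add: abs_mult power_divide divide_le_eq mult.commute)
  qed
  then show ?thesis
    by (rule that)
qed

lemma rho_lt_1_pow_mat_tendsto_0: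
  fixes T :: "real mat"
  assumes T: "T \<in> carrier_mat m m" and rho: "rho T < 1" and ij: "i < m" "j < m"
  shows "(\<lambda>k. (T ^\<^sub>m k) $$ (i, j)) \<longlonglongrightarrow> 0"
proof -
  have m: "0 < m"
    using ij by simp
  define b where "b = (rho T + 1) / 2"
  have b: "0 < b" "b < 1" "rho T < b"
    using rho rho_nonneg[OF T m] unfolding b_def by auto
  obtain c where c: "\<And>k i j. i < m \<Longrightarrow> j < m \<Longrightarrow> \<bar>(T ^\<^sub>m k) $$ (i, j)\<bar> \<le> c * b ^ k"
    using pow_mat_geometric_bound[OF T m b(3)] by blast
  show ?thesis
  proof (rule tendsto_0_le[OF LIMSEQ_power_zero, where K = c])
    show "norm b < 1"
      using b by simp
    show "\<forall>\<^sub>F k in sequentially. norm ((T ^\<^sub>m k) $$ (i, j)) \<le> norm (b ^ k) * c"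
      using c[OF ij] b by (simp add: mult.commute)
  qed
qed

lemma positive_subinvariant_smult:
  assumes "0 < a" "positive_subinvariant (a \<cdot>\<^sub>m W) \<beta> z"
  shows "positive_subinvariant W (\<beta> / a) z"
proof -
  have "(\<Sum>j<dim_col W. W $$ (i, j) * z j) \<le> \<beta> / a * z i" if
    "(\<Sum>j<dim_col W. a * W $$ (i, j) * z j) \<le> \<beta> * z i" for i
  proof -
    have "a * (\<Sum>j<dim_col W. W $$ (i, j) * z j) \<le> \<beta> * z i"
      using that by (simp add: sum_distrib_left mult.assoc)
    then show ?thesis
      using assms(1) by (simp add: le_divide_eq mult.commute)
  qed
  then show ?thesis
    using assms(2) unfolding positive_subinvariant_def by simp
qed

(* With e = (1, ..., 1) and z = (\<Sum>k<K. T^k e), telescoping gives T z = z - e + T^K e \<le> z. *)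
lemma positive_subinvariant_neumann_sum:
  fixes T :: "real mat"
  assumes T: "T \<in> carrier_mat m m" and nonneg: "0\<^sub>m m m \<le> T" and K: "0 < K"
    and tail: "\<And>i. i < m \<Longrightarrow> (\<Sum>l<m. (T ^\<^sub>m K) $$ (i, l)) \<le> 1"
  shows "positive_subinvariant T 1 (\<lambda>i. \<Sum>k<K. \<Sum>l<m. (T ^\<^sub>m k) $$ (i, l))"
proof -
  define s where "s k i = (\<Sum>l<m. (T ^\<^sub>m k) $$ (i, l))" for k i
  have s_0: "s 0 i = 1" if "i < m" for i
  proof -
    have "s 0 i = (\<Sum>l<m. if i = l then 1 else 0)"
      unfolding s_def using that T by (intro sum.cong) auto
    also have "\<dots> = 1"
      using that by (simp add: sum.delta)
    finally show ?thesis .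
  qed
  have s_nonneg: "0 \<le> s k i" if "i < m" for k i
    unfolding s_def using nonneg_mat_index[OF pow_mat_nonneg[OF T nonneg, of k]] that
    by (intro sum_nonneg) simp
  have s_Suc: "(\<Sum>j<m. T $$ (i, j) * s k j) = s (Suc k) i" if "i < m" for i k
    using sum_mult_row_sums[OF T pow_carrier_mat[OF T] that, of k]
    unfolding s_def pow_mat_Suc_left[OF T] .
  have "0 < (\<Sum>k<K. s k i)" if i: "i < m" for i
    using member_le_sum[of 0 "{..<K}" "\<lambda>k. s k i"] K s_0[OF i] s_nonneg[OF i] by simp
  moreover have "(\<Sum>j<m. T $$ (i, j) * (\<Sum>k<K. s k j)) \<le> (\<Sum>k<K. s k i)" if i: "i < m" for i
  proof -
    have "(\<Sum>j<m. T $$ (i, j) * (\<Sum>k<K. s k j)) = (\<Sum>k<K. \<Sum>j<m. T $$ (i, j) * s k j)"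
      unfolding sum_distrib_left by (rule sum.swap)
    also have "\<dots> = (\<Sum>k<K. s (Suc k) i)"
      using s_Suc[OF i] by simp
    also have "\<dots> = (\<Sum>k<K. s k i) + s K i - s 0 i"
      using sum_lessThan_telescope[of "\<lambda>k. s k i" K] by (simp add: sum_subtractf)
    also have "\<dots> \<le> (\<Sum>k<K. s k i)"
      using tail[OF i] s_0[OF i] unfolding s_def by simp
    finally show ?thesis .
  qed
  ultimately show ?thesis
    using T unfolding positive_subinvariant_def s_def by simp
qed

lemma positive_subinvariant_exists:
  fixes W :: "real mat"
  assumes W: "W \<in> carrier_mat m m" and m: "0 < m" and nonneg: "0\<^sub>m m m \<le> W"
    and rho: "rho W < \<beta>"
  obtains z where "positive_subinvariant W \<beta> z"
proof -
  have \<beta>: "0 < \<beta>"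
    using rho rho_nonneg[OF W m] by simp
  define T where "T = (1 / \<beta>) \<cdot>\<^sub>m W"
  have T: "T \<in> carrier_mat m m"
    using W unfolding T_def by simp
  have T_nonneg: "0\<^sub>m m m \<le> T"
    using nonneg \<beta> W unfolding T_def by (auto simp: less_eq_mat_def)
  have "rho T \<le> rho W / \<beta>"
    using rho_smult_le[OF W m, of "1 / \<beta>"] \<beta> unfolding T_def by simp
  moreover have "rho W / \<beta> < 1"
    using rho \<beta> by simp
  ultimately have "rho T < 1"
    by linarith
  then have "\<forall>\<^sub>F k in sequentially. (T ^\<^sub>m k) $$ (i, j) < 1 / m" if "i < m" "j < m" for i j
    using order_tendstoD(2)[OF rho_lt_1_pow_mat_tendsto_0[OF T _ that]] m by simp
  then have "\<forall>\<^sub>F k in sequentially. \<forall>ij \<in> {..<m} \<times> {..<m}. (T ^\<^sub>m k) $$ ij < 1 / m"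
    by (intro eventually_ball_finite) auto
  then obtain N where small: "\<And>i j. i < m \<Longrightarrow> j < m \<Longrightarrow> (T ^\<^sub>m Suc N) $$ (i, j) < 1 / m"
    unfolding eventually_sequentially by (meson SigmaI le_Suc_eq lessThan_iff order_refl)
  have "(\<Sum>l<m. (T ^\<^sub>m Suc N) $$ (i, l)) \<le> 1" if "i < m" for i
  proof -
    have "(\<Sum>l<m. (T ^\<^sub>m Suc N) $$ (i, l)) \<le> (\<Sum>l<m. 1 / m)"
      using small[OF that] by (intro sum_mono) (simp add: less_imp_le)
    then show ?thesis
      using m by simp
  qed
  from positive_subinvariant_neumann_sum[OF T T_nonneg _ this]
  have "positive_subinvariant ((1 / \<beta>) \<cdot>\<^sub>m W) 1 (\<lambda>i. \<Sum>k<Suc N. \<Sum>l<m. (T ^\<^sub>m k) $$ (i, l))"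
    unfolding T_def by simp
  from positive_subinvariant_smult[OF _ this] \<beta> show ?thesis
    using that by simp
qed

section \<open>Block companion matrices\<close>

abbreviation block_companion_mat :: "nat \<Rightarrow> 'a :: {zero, one} mat \<Rightarrow> 'a mat \<Rightarrow> 'a mat" where
  "block_companion_mat n B C \<equiv> four_block_mat B C (1\<^sub>m n) (0\<^sub>m n n)"

lemma block_companion_mat_nonneg:
  fixes B C :: "real mat"
  assumes "B \<in> carrier_mat n n" "C \<in> carrier_mat n n" "0\<^sub>m n n \<le> B" "0\<^sub>m n n \<le> C"
  shows "0\<^sub>m (n + n) (n + n) \<le> block_companion_mat n B C"
  using assms by (auto simp: less_eq_mat_def)

lemma block_companion_mat_row_sum:
  fixes B C :: "real mat"
  assumes B: "B \<in> carrier_mat n n" and C: "C \<in> carrier_mat n n" and i: "i < n + n"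
  shows "(\<Sum>j<n + n. block_companion_mat n B C $$ (i, j) * z j) =
    (if i < n then (\<Sum>j<n. B $$ (i, j) * z j + C $$ (i, j) * z (n + j)) else z (i - n))"
proof -
  let ?W = "block_companion_mat n B C"
  have "(\<Sum>j<n + n. ?W $$ (i, j) * z j) = (\<Sum>j<n. ?W $$ (i, j) * z j + ?W $$ (i, n + j) * z (n + j))"
    by (simp add: sum.distrib atLeast0LessThan[symmetric] sum.atLeastLessThan_shift_0[of _ n "n + n"]
        sum.atLeastLessThan_concat[of 0 n "n + n", symmetric])
  also have "\<dots> = (if i < n then (\<Sum>j<n. B $$ (i, j) * z j + C $$ (i, j) * z (n + j))
      else (\<Sum>j<n. (if i - n = j then 1 else 0) * z j))"
    using B C i by (auto intro!: sum.cong)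
  also have "\<dots> = (if i < n then (\<Sum>j<n. B $$ (i, j) * z j + C $$ (i, j) * z (n + j)) else z (i - n))"
    using i by (auto simp: if_distrib[of "\<lambda>x. x * _"] sum.delta cong: if_cong)
  finally show ?thesis .
qed

lemma uniform_contraction_factor:
  fixes f y :: "nat \<Rightarrow> real"
  assumes y_pos: "\<And>i. i < n \<Longrightarrow> 0 < y i" and less: "\<And>i. i < n \<Longrightarrow> f i < y i"
  shows "\<exists>q. 0 \<le> q \<and> q < 1 \<and> (\<forall>i<n. f i \<le> q * y i)"
proof -
  define q where "q = Max (insert 0 ((\<lambda>i. f i / y i) ` {..<n}))"
  have "0 \<le> q"
    unfolding q_def by (rule Max_ge) auto
  moreover have "f i / y i < 1" if "i < n" for i
    using less[OF that] y_pos[OF that] by simp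
  then have "q < 1"
    unfolding q_def by (subst Max_less_iff) auto
  moreover have "f i \<le> q * y i" if "i < n" for i
  proof -
    have "f i / y i \<le> q"
      unfolding q_def by (rule Max_ge) (use that in auto)
    then show ?thesis
      using y_pos[OF that] by (simp add: divide_le_eq)
  qed
  ultimately show ?thesis
    by (intro exI[of _ q]) simp
qed

lemma positive_subinvariant_block_companion_mat:
  fixes B C :: "real mat"
  assumes B: "B \<in> carrier_mat n n" and C: "C \<in> carrier_mat n n" and B_nonneg: "0\<^sub>m n n \<le> B"
    and y_pos: "\<And>i. i < n \<Longrightarrow> 0 < y i"
    and contracting: "\<And>i. i < n \<Longrightarrow> (\<Sum>j<n. (B + C) $$ (i, j) * y j) \<le> q * y i"
    and \<beta>: "0 < \<beta>" "\<beta> \<le> 1" "q \<le> \<beta> * \<beta>"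
  shows "positive_subinvariant (block_companion_mat n B C) \<beta> (\<lambda>j. if j < n then \<beta> * y j else y (j - n))"
    (is "positive_subinvariant _ _ ?z")
proof -
  have dim: "dim_row (block_companion_mat n B C) = n + n" "dim_col (block_companion_mat n B C) = n + n"
    using B by auto
  show ?thesis
    unfolding positive_subinvariant_def dim
  proof (intro allI impI conjI)
    fix i
    assume i: "i < n + n"
    show "0 < ?z i"
      using i y_pos \<beta> by simp
    show "(\<Sum>j<n + n. block_companion_mat n B C $$ (i, j) * ?z j) \<le> \<beta> * ?z i"
    proof (cases "i < n")
      case True
      have "(\<Sum>j<n. B $$ (i, j) * ?z j + C $$ (i, j) * ?z (n + j)) \<le> (\<Sum>j<n. (B + C) $$ (i, j) * y j)"
      proof (intro sum_mono)
        fix j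
        assume "j \<in> {..<n}"
        then have j: "j < n" by simp
        have "B $$ (i, j) * (\<beta> * y j) \<le> B $$ (i, j) * y j"
          using nonneg_mat_index[OF B_nonneg True j] y_pos[OF j] \<beta> by (intro mult_left_mono) auto
        then show "B $$ (i, j) * ?z j + C $$ (i, j) * ?z (n + j) \<le> (B + C) $$ (i, j) * y j"
          using True j B C by (simp add: algebra_simps)
      qed
      also have "\<dots> \<le> q * y i"
        by (rule contracting[OF True])
      also have "\<dots> \<le> \<beta> * \<beta> * y i"
        using \<beta>(3) y_pos[OF True] by (intro mult_right_mono) auto
      also have "\<dots> = \<beta> * ?z i"
        using True by simp
      finally show ?thesis
        using block_companion_mat_row_sum[OF B C i] True by simp
    next
      case False
      then have "?z (i - n) = \<beta> * ?z i"
        using i by simp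
      then show ?thesis
        unfolding block_companion_mat_row_sum[OF B C i] if_not_P[OF False] by simp
    qed
  qed
qed

lemma rho_block_companion_mat_lt_1:
  fixes B C :: "real mat"
  assumes B: "B \<in> carrier_mat n n" and C: "C \<in> carrier_mat n n" and n: "0 < n"
    and B_nonneg: "0\<^sub>m n n \<le> B" and C_nonneg: "0\<^sub>m n n \<le> C"
    and y_pos: "\<And>i. i < n \<Longrightarrow> 0 < y i"
    and contracting: "\<And>i. i < n \<Longrightarrow> (\<Sum>j<n. (B + C) $$ (i, j) * y j) < y i"
  shows "rho (block_companion_mat n B C) < 1"
proof -
  obtain q where q: "0 \<le> q" "q < 1" and
    q_contracting: "\<forall>i<n. (\<Sum>j<n. (B + C) $$ (i, j) * y j) \<le> q * y i"
    using uniform_contraction_factor[where f = "\<lambda>i. \<Sum>j<n. (B + C) $$ (i, j) * y j", OF y_pos contracting]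
    by blast
  \<comment> \<open>Chosen so that q \<le> \<beta> * \<beta>, which the upper block rows need.\<close>
  define \<beta> where "\<beta> = (1 + q) / 2"
  have "0 \<le> 1 - 2 * q + q * q"
    using zero_le_square[of "1 - q"] by (simp add: algebra_simps)
  then have \<beta>: "0 < \<beta>" "\<beta> < 1" "q \<le> \<beta> * \<beta>"
    using q unfolding \<beta>_def by (auto simp: field_simps)
  have "positive_subinvariant (block_companion_mat n B C) \<beta>
      (\<lambda>j. if j < n then \<beta> * y j else y (j - n))"
    by (rule positive_subinvariant_block_companion_mat[OF B C B_nonneg y_pos q_contracting[rule_format]])
      (use \<beta> in auto)
  from rho_le_if_positive_subinvariant[OF _ _ block_companion_mat_nonneg[OF B C B_nonneg C_nonneg] this]
  have "rho (block_companion_mat n B C) \<le> \<beta>"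
    using B n by simp
  with \<beta> show ?thesis
    by simp
qed

lemma positive_subinvariant_block_companion_mat_upper_le_lower:
  fixes B C :: "real mat"
  assumes B: "B \<in> carrier_mat n n" and C: "C \<in> carrier_mat n n" and \<beta>: "\<beta> \<le> 1"
    and z: "positive_subinvariant (block_companion_mat n B C) \<beta> z" and j: "j < n"
  shows "z j \<le> z (n + j)"
proof -
  have dim: "dim_row (block_companion_mat n B C) = n + n" "dim_col (block_companion_mat n B C) = n + n"
    using B by auto
  have "n + j < n + n"
    using j by simp
  from z[unfolded positive_subinvariant_def dim, rule_format, OF this]
  have "z j \<le> \<beta> * z (n + j)" and "0 < z (n + j)"
    using block_companion_mat_row_sum[OF B C, of "n + j" z] j by auto
  with \<beta> show ?thesis
    by (simp add: mult_left_le_one_le order.trans)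
qed

(* b x + c u = (b + c) u - b (u - x) *)
lemma companion_row_term_mono:
  fixes b1 c1 b2 c2 x u :: real
  assumes "b2 \<le> b1" "b1 + c1 \<le> b2 + c2" "x \<le> u" "0 \<le> u"
  shows "b1 * x + c1 * u \<le> b2 * x + c2 * u"
proof -
  have "b2 * (u - x) \<le> b1 * (u - x)" "(b1 + c1) * u \<le> (b2 + c2) * u"
    using assms by (auto intro: mult_right_mono)
  then show ?thesis
    by (simp add: algebra_simps)
qed

lemma positive_subinvariant_block_companion_mat_mono:
  fixes B1 C1 B2 C2 :: "real mat"
  assumes carrier: "B1 \<in> carrier_mat n n" "C1 \<in> carrier_mat n n"
      "B2 \<in> carrier_mat n n" "C2 \<in> carrier_mat n n"
    and B: "B2 \<le> B1" and BC: "B1 + C1 \<le> B2 + C2" and \<beta>: "\<beta> \<le> 1"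
    and z: "positive_subinvariant (block_companion_mat n B2 C2) \<beta> z"
  shows "positive_subinvariant (block_companion_mat n B1 C1) \<beta> z"
proof -
  have z_pos: "0 < z i" if "i < n + n" for i
    using z that carrier unfolding positive_subinvariant_def by simp
  have z_sub: "(\<Sum>j<n + n. block_companion_mat n B2 C2 $$ (i, j) * z j) \<le> \<beta> * z i"
    if "i < n + n" for i
    using z that carrier unfolding positive_subinvariant_def by simp
  have upper_le_lower: "z j \<le> z (n + j)" if "j < n" for j
    by (rule positive_subinvariant_block_companion_mat_upper_le_lower[OF carrier(3,4) \<beta> z that])
  have "(\<Sum>j<n + n. block_companion_mat n B1 C1 $$ (i, j) * z j)
      \<le> (\<Sum>j<n + n. block_companion_mat n B2 C2 $$ (i, j) * z j)" if i: "i < n + n" for i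
  proof (cases "i < n")
    case True
    have "B1 $$ (i, j) * z j + C1 $$ (i, j) * z (n + j) \<le> B2 $$ (i, j) * z j + C2 $$ (i, j) * z (n + j)"
      if j: "j < n" for j
      using B BC True j carrier upper_le_lower[OF j] z_pos[of "n + j"]
      by (intro companion_row_term_mono) (auto simp: less_eq_mat_def)
    then have "(\<Sum>j<n. B1 $$ (i, j) * z j + C1 $$ (i, j) * z (n + j))
        \<le> (\<Sum>j<n. B2 $$ (i, j) * z j + C2 $$ (i, j) * z (n + j))"
      by (intro sum_mono) simp
    then show ?thesis
      unfolding block_companion_mat_row_sum[OF carrier(1,2) i]
        block_companion_mat_row_sum[OF carrier(3,4) i] if_P[OF True] .
  next
    case False
    then show ?thesis
      using block_companion_mat_row_sum[OF carrier(1,2) i] block_companion_mat_row_sum[OF carrier(3,4) i]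
      by simp
  qed
  then show ?thesis
    using z_pos z_sub carrier unfolding positive_subinvariant_def by (auto intro: order.trans)
qed

lemma rho_block_companion_mat_mono:
  fixes B1 C1 B2 C2 :: "real mat"
  assumes carrier: "B1 \<in> carrier_mat n n" "C1 \<in> carrier_mat n n"
      "B2 \<in> carrier_mat n n" "C2 \<in> carrier_mat n n"
    and n: "0 < n"
    and nonneg: "0\<^sub>m n n \<le> B1" "0\<^sub>m n n \<le> C1" "0\<^sub>m n n \<le> B2" "0\<^sub>m n n \<le> C2"
    and B: "B2 \<le> B1" and BC: "B1 + C1 \<le> B2 + C2"
    and rho_lt_1: "rho (block_companion_mat n B2 C2) < 1"
  shows "rho (block_companion_mat n B1 C1) \<le> rho (block_companion_mat n B2 C2)"
proof (rule dense_ge_bounded[OF rho_lt_1])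
  fix \<beta>
  assume "rho (block_companion_mat n B2 C2) < \<beta>" "\<beta> < 1"
  moreover have "0 < n + n"
    using n by simp
  ultimately obtain z where "positive_subinvariant (block_companion_mat n B2 C2) \<beta> z"
    using positive_subinvariant_exists[of _ "n + n"] block_companion_mat_nonneg carrier nonneg
    by (metis four_block_carrier_mat one_carrier_mat zero_carrier_mat)
  with positive_subinvariant_block_companion_mat_mono[OF carrier B BC] \<open>\<beta> < 1\<close>
  have "positive_subinvariant (block_companion_mat n B1 C1) \<beta> z"
    by simp
  then show "rho (block_companion_mat n B1 C1) \<le> \<beta>"
    using carrier n nonneg by (intro rho_le_if_positive_subinvariant[of _ "n + n"]
        block_companion_mat_nonneg) auto
qed

section \<open>Composed double splittings\<close>

lemma double_weak_regular_splittingD: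
  fixes A P R S :: "real mat"
  assumes "double_weak_regular_splitting A P R S"
    "P \<in> carrier_mat n n" "R \<in> carrier_mat n n" "S \<in> carrier_mat n n"
  shows "A = P - R + S" "invertible_mat P" "0\<^sub>m n n \<le> minv P"
    "0\<^sub>m n n \<le> minv P * R" "minv P * S \<le> 0\<^sub>m n n"
  using assms unfolding double_weak_regular_splitting_def by auto

lemma minv_mult_splitting:
  fixes A P R S :: "real mat"
  assumes carrier: "A \<in> carrier_mat n n" "P \<in> carrier_mat n n" "R \<in> carrier_mat n n" "S \<in> carrier_mat n n"
    and split: "double_weak_regular_splitting A P R S"
  shows "minv P * A = 1\<^sub>m n - minv P * R + minv P * S"
proof -
  note A = double_weak_regular_splittingD(1)[OF split carrier(2-4)]
    and P = double_weak_regular_splittingD(2)[OF split carrier(2-4)]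
  note Pi = minv_carrier_mat[OF carrier(2) P]
  have "minv P * A = minv P * (P - R) + minv P * S"
    unfolding A by (rule mult_add_distrib_mat) (use carrier Pi in auto)
  also have "minv P * (P - R) = minv P * P - minv P * R"
    by (rule mult_minus_distrib_mat) (use carrier Pi in auto)
  finally show ?thesis
    using minv_mult_mat[OF carrier(2) P] by simp
qed

lemma composed_factor_eq:
  fixes Pi Pi' S' A Y Z U :: "real mat"
  assumes carrier: "Pi \<in> carrier_mat n n" "Pi' \<in> carrier_mat n n" "S' \<in> carrier_mat n n"
      "A \<in> carrier_mat n n" "Y \<in> carrier_mat n n" "Z \<in> carrier_mat n n" "U \<in> carrier_mat n n"
    and PiA: "Pi * A = 1\<^sub>m n - Y + Z" and PiA': "Pi' * A = 1\<^sub>m n - U + Pi' * S'"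
  shows "Pi' * ((1\<^sub>m n - S' * Pi) * A) = 1\<^sub>m n - (U - (Pi' * S') * Y) - (Pi' * S') * Z"
proof -
  define X where "X = Pi' * S'"
  have X: "X \<in> carrier_mat n n"
    unfolding X_def using carrier by simp
  have "(1\<^sub>m n - S' * Pi) * A = 1\<^sub>m n * A - S' * Pi * A"
    by (rule minus_mult_distrib_mat) (use carrier in auto)
  also have "\<dots> = A - S' * (Pi * A)"
    using carrier by (simp add: assoc_mult_mat[of S' n n Pi n A n])
  finally have "Pi' * ((1\<^sub>m n - S' * Pi) * A) = Pi' * (A - S' * (Pi * A))"
    by simp
  also have "\<dots> = Pi' * A - Pi' * (S' * (Pi * A))"
    by (rule mult_minus_distrib_mat) (use carrier in auto)
  also have "Pi' * (S' * (Pi * A)) = X * (Pi * A)"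
    unfolding X_def by (rule assoc_mult_mat[symmetric]) (use carrier in auto)
  also have "X * (Pi * A) = X * (1\<^sub>m n - Y) + X * Z"
    unfolding PiA by (rule mult_add_distrib_mat) (use X carrier in auto)
  also have "X * (1\<^sub>m n - Y) = X - X * Y"
    using X carrier by (simp add: mult_minus_distrib_mat[of X n n "1\<^sub>m n" n Y])
  finally have "Pi' * ((1\<^sub>m n - S' * Pi) * A) = (1\<^sub>m n - U + X) - (X - X * Y + X * Z)"
    unfolding PiA' X_def .
  also have "\<dots> = 1\<^sub>m n - (U - X * Y) - X * Z"
    using X carrier by (intro eq_matI) auto
  finally show ?thesis
    unfolding X_def .
qed

lemma
  fixes A P R S P' R' S' :: "real mat"
  assumes carrier: "A \<in> carrier_mat n n" "P \<in> carrier_mat n n" "R \<in> carrier_mat n n"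
      "S \<in> carrier_mat n n" "P' \<in> carrier_mat n n" "R' \<in> carrier_mat n n" "S' \<in> carrier_mat n n"
    and split: "double_weak_regular_splitting A P R S"
    and split': "double_weak_regular_splitting A P' R' S'"
  shows composed_splitting_carrier:
      "minv P' * R' - minv P' * S' * minv P * R \<in> carrier_mat n n"
      "minv P' * S' * minv P * S \<in> carrier_mat n n"
    and composed_splitting_nonneg:
      "0\<^sub>m n n \<le> minv P' * R' - minv P' * S' * minv P * R"
      "0\<^sub>m n n \<le> minv P' * S' * minv P * S"
    and composed_splitting_minv_mult: "minv P' * (R' - S' * minv P * R)
      = minv P' * R' - minv P' * S' * minv P * R"
    and composed_splitting_eq: "minv P' * ((1\<^sub>m n - S' * minv P) * A)
      = 1\<^sub>m n - (minv P' * R' - minv P' * S' * minv P * R) - minv P' * S' * minv P * S"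
proof -
  note P = double_weak_regular_splittingD(2,4,5)[OF split carrier(2-4)]
    and P' = double_weak_regular_splittingD(2,4,5)[OF split' carrier(5-7)]
  have Pi: "minv P \<in> carrier_mat n n" and Pi': "minv P' \<in> carrier_mat n n"
    by (rule minv_carrier_mat[OF carrier(2) P(1)], rule minv_carrier_mat[OF carrier(5) P'(1)])
  have assoc: "minv P' * S' * minv P * R = (minv P' * S') * (minv P * R)"
    "minv P' * S' * minv P * S = (minv P' * S') * (minv P * S)"
    using mult_mat_assoc_middle Pi Pi' carrier by blast+
  show "minv P' * R' - minv P' * S' * minv P * R \<in> carrier_mat n n"
    "minv P' * S' * minv P * S \<in> carrier_mat n n"
    unfolding assoc using Pi Pi' carrier by (auto intro!: minus_carrier_mat)
  show "0\<^sub>m n n \<le> minv P' * R' - minv P' * S' * minv P * R"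
    unfolding assoc using P'(2) mult_mat_nonpos_nonneg[OF _ _ P'(3) P(2)] Pi Pi' carrier
    by (intro nonneg_minus_nonpos_mat) auto
  show "0\<^sub>m n n \<le> minv P' * S' * minv P * S"
    unfolding assoc using Pi Pi' carrier by (intro mult_mat_nonpos_nonpos[OF _ _ P'(3) P(3)]) auto
  show "minv P' * (R' - S' * minv P * R) = minv P' * R' - minv P' * S' * minv P * R"
    using mult_minus_mult_assoc_mat Pi Pi' carrier by blast
  show "minv P' * ((1\<^sub>m n - S' * minv P) * A)
      = 1\<^sub>m n - (minv P' * R' - minv P' * S' * minv P * R) - minv P' * S' * minv P * S"
    unfolding assoc
    by (rule composed_factor_eq[OF Pi Pi' carrier(7,1) _ _ _ minv_mult_splitting[OF carrier(1-4) split]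
        minv_mult_splitting[OF carrier(1,5-7) split']]) (use Pi Pi' carrier in auto)
qed

lemma contracting_vector_of_monotone_factor:
  fixes B C Pi Ah :: "real mat"
  assumes B: "B \<in> carrier_mat n n" and C: "C \<in> carrier_mat n n"
    and Pi: "Pi \<in> carrier_mat n n" and Ah: "Ah \<in> carrier_mat n n"
    and Pi_nonneg: "0\<^sub>m n n \<le> Pi" and Pi_inv: "invertible_mat Pi"
    and Ah_mono: "monotone_mat Ah" and factor: "Pi * Ah = 1\<^sub>m n - B - C"
  obtains y where "\<And>i. i < n \<Longrightarrow> 0 < y i"
    "\<And>i. i < n \<Longrightarrow> (\<Sum>j<n. (B + C) $$ (i, j) * y j) < y i"
proof -
  have Ah_inv: "invertible_mat Ah" and Ai_nonneg: "0\<^sub>m n n \<le> minv Ah"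
    using Ah_mono Ah unfolding monotone_mat_def by auto
  note Ai = minv_carrier_mat[OF Ah Ah_inv]
  define y where "y i = (\<Sum>k<n. minv Ah $$ (i, k))" for i
  have y_pos: "0 < y i" if "i < n" for i
    unfolding y_def using nonneg_invertible_row_sum_pos[OF Ai Ai_nonneg invertible_minv[OF Ah Ah_inv] that] .
  have "(\<Sum>j<n. (B + C) $$ (i, j) * y j) < y i" if i: "i < n" for i
  proof -
    have "y i - (\<Sum>j<n. (B + C) $$ (i, j) * y j)
        = (\<Sum>j<n. (if i = j then y j else 0) - (B + C) $$ (i, j) * y j)"
      using i by (simp add: sum_subtractf sum.delta)
    also have "\<dots> = (\<Sum>j<n. (1\<^sub>m n - B - C) $$ (i, j) * y j)"
      using i B C by (intro sum.cong) (auto simp: algebra_simps)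
    also have "\<dots> = (\<Sum>k<n. (Pi * Ah * minv Ah) $$ (i, k))"
      unfolding y_def factor[symmetric] using Pi Ah Ai i by (intro sum_mult_row_sums) auto
    also have "Pi * Ah * minv Ah = Pi"
      using Pi Ah Ai mult_minv_mat[OF Ah Ah_inv] by simp
    finally show ?thesis
      using nonneg_invertible_row_sum_pos[OF Pi Pi_nonneg Pi_inv i] by simp
  qed
  with y_pos that show ?thesis
    by blast
qed

lemma rho_composed_splitting_lt_1:
  fixes A P R S P' R' S' :: "real mat"
  assumes n: "0 < n" and carrier: "A \<in> carrier_mat n n" "P \<in> carrier_mat n n" "R \<in> carrier_mat n n"
      "S \<in> carrier_mat n n" "P' \<in> carrier_mat n n" "R' \<in> carrier_mat n n" "S' \<in> carrier_mat n n"
    and split: "double_weak_regular_splitting A P R S"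
    and split': "double_weak_regular_splitting A P' R' S'"
    and Ahat: "invertible_mat ((1\<^sub>m n - S' * minv P) * A)"
      "minv ((1\<^sub>m n - S' * minv P) * A) \<ge> 0\<^sub>m n n"
  shows "rho (block_companion_mat n (minv P' * R' - minv P' * S' * minv P * R)
    (minv P' * S' * minv P * S)) < 1"
proof -
  let ?B = "minv P' * R' - minv P' * S' * minv P * R" and ?C = "minv P' * S' * minv P * S"
  note composed = carrier split split'
  note P = double_weak_regular_splittingD(2)[OF split carrier(2-4)]
    and P' = double_weak_regular_splittingD(2,3)[OF split' carrier(5-7)]
  have Ahat_carrier: "(1\<^sub>m n - S' * minv P) * A \<in> carrier_mat n n"
    using carrier minv_carrier_mat[OF carrier(2) P] by (intro mult_carrier_mat minus_carrier_mat) auto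
  have "monotone_mat ((1\<^sub>m n - S' * minv P) * A)"
    using Ahat carrier unfolding monotone_mat_def by simp
  from contracting_vector_of_monotone_factor[OF composed_splitting_carrier[OF composed]
      minv_carrier_mat[OF carrier(5) P'(1)] Ahat_carrier P'(2) invertible_minv[OF carrier(5) P'(1)]
      this composed_splitting_eq[OF composed]]
  obtain y where "\<And>i. i < n \<Longrightarrow> 0 < y i" "\<And>i. i < n \<Longrightarrow> (\<Sum>j<n. (?B + ?C) $$ (i, j) * y j) < y i"
    by blast
  then show ?thesis
    by (rule rho_block_companion_mat_lt_1[OF composed_splitting_carrier[OF composed] n
          composed_splitting_nonneg[OF composed]])
qed

theorem corollary3p14:
  fixes n :: nat and A P1 R1 S1 P2 R2 S2 P3 R3 S3 P4 R4 S4 :: "real mat"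
  assumes n: "n > 0"
    and dims: "A \<in> carrier_mat n n"
      "P1 \<in> carrier_mat n n" "R1 \<in> carrier_mat n n" "S1 \<in> carrier_mat n n"
      "P2 \<in> carrier_mat n n" "R2 \<in> carrier_mat n n" "S2 \<in> carrier_mat n n"
      "P3 \<in> carrier_mat n n" "R3 \<in> carrier_mat n n" "S3 \<in> carrier_mat n n"
      "P4 \<in> carrier_mat n n" "R4 \<in> carrier_mat n n" "S4 \<in> carrier_mat n n"
    and mono: "monotone_mat A"
    and spl1: "double_weak_regular_splitting A P1 R1 S1"
    and spl2: "double_weak_regular_splitting A P2 R2 S2"
    and spl3: "double_weak_regular_splitting A P3 R3 S3"
    and spl4: "double_weak_regular_splitting A P4 R4 S4"
    and sp1: "1 \<notin> spectrum (S2 * minv P1)"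
    and sp2: "1 \<notin> spectrum (S4 * minv P3)"
    and Ah1: "invertible_mat ((1\<^sub>m n - S2 * minv P1) * A)"
             "minv ((1\<^sub>m n - S2 * minv P1) * A) \<ge> 0\<^sub>m n n"
    and Ah2: "invertible_mat ((1\<^sub>m n - S4 * minv P3) * A)"
             "minv ((1\<^sub>m n - S4 * minv P3) * A) \<ge> 0\<^sub>m n n"
    and cmpA: "minv P2 * ((1\<^sub>m n - S2 * minv P1) * A) \<ge> minv P4 * ((1\<^sub>m n - S4 * minv P3) * A)"
    and cmpR: "minv P2 * (R2 - S2 * minv P1 * R1) \<ge> minv P4 * (R4 - S4 * minv P3 * R3)"
  shows "rho (four_block_mat (minv P2 * R2 - minv P2 * S2 * minv P1 * R1)
                             (minv P2 * S2 * minv P1 * S1) (1\<^sub>m n) (0\<^sub>m n n))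
         \<le> rho (four_block_mat (minv P4 * R4 - minv P4 * S4 * minv P3 * R3)
                             (minv P4 * S4 * minv P3 * S3) (1\<^sub>m n) (0\<^sub>m n n))
       \<and> rho (four_block_mat (minv P4 * R4 - minv P4 * S4 * minv P3 * R3)
                             (minv P4 * S4 * minv P3 * S3) (1\<^sub>m n) (0\<^sub>m n n)) < 1"
proof -
  define B12 C12 B34 C34 where
    "B12 = minv P2 * R2 - minv P2 * S2 * minv P1 * R1" and "C12 = minv P2 * S2 * minv P1 * S1" and
    "B34 = minv P4 * R4 - minv P4 * S4 * minv P3 * R3" and "C34 = minv P4 * S4 * minv P3 * S3"
  note split12 = dims(1-7) spl1 spl2 and split34 = dims(1,8-13) spl3 spl4
  note carrier = composed_splitting_carrier[OF split12, folded B12_def C12_def]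
    composed_splitting_carrier[OF split34, folded B34_def C34_def]
  note nonneg = composed_splitting_nonneg[OF split12, folded B12_def C12_def]
    composed_splitting_nonneg[OF split34, folded B34_def C34_def]
  have rho34: "rho (block_companion_mat n B34 C34) < 1"
    unfolding B34_def C34_def by (rule rho_composed_splitting_lt_1[OF n split34 Ah2])
  have "B34 \<le> B12"
    using cmpR unfolding composed_splitting_minv_mult[OF split12, folded B12_def]
      composed_splitting_minv_mult[OF split34, folded B34_def] .
  moreover have "B12 + C12 \<le> B34 + C34"
    using cmpA unfolding composed_splitting_eq[OF split12, folded B12_def C12_def]
      composed_splitting_eq[OF split34, folded B34_def C34_def]
      one_minus_minus_le_mat_iff[OF carrier(3,4,1,2)] .
  ultimately have "rho (block_companion_mat n B12 C12) \<le> rho (block_companion_mat n B34 C34)"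
    using rho_block_companion_mat_mono[OF carrier n nonneg _ _ rho34] by blast
  with rho34 show ?thesis
    unfolding B12_def C12_def B34_def C34_def by simp
qed

end
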